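(* For every $n\ge 1$ and every $\pi\in S_n$, the permutation $\pi$ is $(n-1)$-stack-sortable under $s_{1\dot{2}}$, i.e. $s_{1\dot{2}}^{\,n-1}(\pi)=12\cdots n$.
   Context: The $1\dot{2}$-avoiding stack-sorting map $s_{1\dot{2}}$ is defined as follows. Start with the input $\pi$ and an empty stack. Repeat the following step until both the input and the stack are empty: - If input remains, and either the stack is empty or the next input entry is smaller than the entry at the bottom of the stack, push the next input entry onto the top of the stack. - Otherwise, pop the top entry of the stack and append it to the output. The output word is $s_{1\dot{2}}(\pi)$. For an integer $t\ge 0$, a permutation $\pi\in S_n$ is called $t$-stack-sortable (under $s_{1\dot{2}}$) if $s_{1\dot{2}}^{\,t}(\pi)$, the $t$-fold iterate applied to $\pi$, equals the identity $12\cdots n$. *)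

theory Defs
  imports Main
begin

text \<open>The stack is a list whose head is the
top of the stack and whose last element is the bottom of the stack.\<close>

function stk_aux :: "nat list \<Rightarrow> nat list \<Rightarrow> nat list" where
  "stk_aux [] [] = []"
| "stk_aux (x # xs) st =
     (if st = [] \<or> x < last st then stk_aux xs (x # st)
      else hd st # stk_aux (x # xs) (tl st))"
| "stk_aux [] (y # ys) = y # stk_aux [] ys"
  by pat_completeness auto
termination
  by (relation "measure (\<lambda>(inp, st). 2 * length inp + length st)") auto

definition s12dot :: "nat list \<Rightarrow> nat list" where
  "s12dot \<pi> = stk_aux \<pi> []"

definition is_perm :: "nat \<Rightarrow> nat list \<Rightarrow> bool" where
  "is_perm n \<pi> \<longleftrightarrow> length \<pi> = n \<and> distinct \<pi> \<and> set \<pi> = {1..n}"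

end

theory Submission
  imports Defs "HOL-Library.Multiset"
begin

text \<open>The bottom of the stack is always its largest entry, and it is the last entry to be
popped; hence one pass of the map moves a maximal entry to the end of the word. Moreover a
maximal entry already at the end of the input is pushed onto an empty stack after everything
else has been output, so it stays at the end under every further pass.\<close>

lemma stk_aux_push: "st = [] \<or> x < last st \<Longrightarrow> stk_aux (x # xs) st = stk_aux xs (x # st)"
  by simp

lemma stk_aux_pop:
  "st \<noteq> [] \<Longrightarrow> \<not> x < last st \<Longrightarrow> stk_aux (x # xs) st = hd st # stk_aux (x # xs) (tl st)"
  by simp

declare stk_aux.simps(2) [simp del]

lemma stk_aux_Nil: "stk_aux [] st = st"
  by (induction st) auto

lemma mset_stk_aux: "mset (stk_aux xs st) = mset xs + mset st"
proof (induction xs st rule: stk_aux.induct)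
  case (2 x xs st)
  show ?case
  proof (cases "st = [] \<or> x < last st")
    case True
    then show ?thesis using "2.IH"(1) by (simp add: stk_aux_push)
  next
    case False
    then show ?thesis using "2.IH"(2) by (cases st) (auto simp: stk_aux_pop)
  qed
qed auto

lemma stk_aux_snoc_max:
  "\<forall>y \<in> set xs \<union> set st. y \<le> m \<Longrightarrow> stk_aux (xs @ [m]) st = stk_aux xs st @ [m]"
proof (induction xs st rule: stk_aux.induct)
  case 1
  then show ?case by (simp add: stk_aux_push)
next
  case (2 x xs st)
  show ?case
  proof (cases "st = [] \<or> x < last st")
    case True
    then show ?thesis using 2 by (simp add: stk_aux_push)
  next
    case False
    have "\<forall>y \<in> set (x # xs) \<union> set (tl st). y \<le> m"
      using "2.prems" False by (cases st) auto
    then show ?thesis using "2.IH"(2) False by (simp add: stk_aux_pop)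
  qed
next
  case (3 y ys)
  then have "\<not> m < last (y # ys)"
    using last_in_set[of "y # ys"] by (auto simp del: last.simps)
  then show ?case using 3 stk_aux_pop[of "y # ys" m "[]"] by (simp del: last.simps)
qed

lemma stk_aux_last_ge:
  assumes "xs @ st \<noteq> []" and "\<forall>y \<in> set st. y \<le> last st"
  shows "\<forall>z \<in> set xs \<union> set st. z \<le> last (stk_aux xs st)"
  using assms
proof (induction xs st rule: stk_aux.induct)
  case (2 x xs st)
  show ?case
  proof (cases "st = [] \<or> x < last st")
    case True
    then have "\<forall>y \<in> set (x # st). y \<le> last (x # st)"
      using "2.prems"(2) by (cases "st = []") auto
    then show ?thesis using "2.IH"(1)[OF True] True by (simp add: stk_aux_push)
  next
    case False
    then have "st \<noteq> []" and bottom_le: "last st \<le> x" by auto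
    then have "\<forall>y \<in> set (tl st). y \<le> last (tl st)"
      using "2.prems"(2) by (cases st; cases "tl st") auto
    then have IH: "\<forall>z \<in> set (x # xs) \<union> set (tl st). z \<le> last (stk_aux (x # xs) (tl st))"
      using "2.IH"(2)[OF False] by simp
    moreover have "stk_aux (x # xs) (tl st) \<noteq> []"
      using mset_stk_aux[of "x # xs" "tl st"] by auto
    moreover have "\<forall>z \<in> set st. z \<le> x"
      using "2.prems"(2) bottom_le by auto
    ultimately show ?thesis using False \<open>st \<noteq> []\<close> by (auto simp: stk_aux_pop)
  qed
qed (auto simp: stk_aux_Nil)

lemma mset_s12dot: "mset (s12dot xs) = mset xs"
  by (simp add: s12dot_def mset_stk_aux)

lemma mset_funpow_s12dot: "mset ((s12dot ^^ j) xs) = mset xs"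
  by (induction j) (auto simp: mset_s12dot)

lemma last_s12dot_ge: "xs \<noteq> [] \<Longrightarrow> z \<in> set xs \<Longrightarrow> z \<le> last (s12dot xs)"
  using stk_aux_last_ge[of xs "[]"] by (simp add: s12dot_def)

lemma s12dot_snoc_max: "\<forall>y \<in> set xs. y \<le> m \<Longrightarrow> s12dot (xs @ [m]) = s12dot xs @ [m]"
  by (simp add: s12dot_def stk_aux_snoc_max)

lemma funpow_s12dot_snoc_max:
  assumes "\<forall>y \<in> set xs. y \<le> m"
  shows "(s12dot ^^ j) (xs @ [m]) = (s12dot ^^ j) xs @ [m]"
proof (induction j)
  case (Suc j)
  have "set ((s12dot ^^ j) xs) = set xs"
    by (metis mset_funpow_s12dot set_mset_mset)
  then show ?case
    using Suc assms by (simp add: s12dot_snoc_max)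
qed simp

lemma sort_snoc_max: "\<forall>y \<in> set xs. y \<le> m \<Longrightarrow> sort (xs @ [m]) = sort xs @ [m]"
  by (intro properties_for_sort) (auto simp: sorted_append)

theorem funpow_s12dot_sorts: "length xs \<le> Suc j \<Longrightarrow> (s12dot ^^ j) xs = sort xs"
proof (induction j arbitrary: xs)
  case 0
  then show ?case by (cases xs) auto
next
  case (Suc j)
  show ?case
  proof (cases "xs = []")
    case True
    then show ?thesis using mset_funpow_s12dot[of "Suc j" xs] by simp
  next
    case False
    define t where "t = s12dot xs"
    have "mset t = mset xs"
      unfolding t_def by (rule mset_s12dot)
    then have set_t: "set t = set xs" and length_t: "length t \<le> Suc (Suc j)"
      using Suc.prems by (metis set_mset_mset, metis size_mset)
    then have "t \<noteq> []"
      using False by auto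
    then have t_split: "t = butlast t @ [last t]"
      by simp
    have max_last: "\<forall>y \<in> set (butlast t). y \<le> last t"
      using last_s12dot_ge[OF False] set_t in_set_butlastD unfolding t_def by fastforce
    have "(s12dot ^^ Suc j) xs = (s12dot ^^ j) t"
      unfolding funpow_Suc_right t_def by simp
    also have "\<dots> = (s12dot ^^ j) (butlast t) @ [last t]"
      by (subst t_split) (rule funpow_s12dot_snoc_max[OF max_last])
    also have "\<dots> = sort (butlast t) @ [last t]"
      using Suc.IH[of "butlast t"] length_t by simp
    also have "\<dots> = sort t"
      using max_last sort_snoc_max t_split by metis
    also have "\<dots> = sort xs"
      using \<open>mset t = mset xs\<close> by (metis sorted_list_of_multiset_mset)
    finally show ?thesis .
  qed
qed

theorem lemma3p2:
  fixes n :: nat and \<pi> :: "nat list"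
  assumes "n \<ge> 1" and "is_perm n \<pi>"
  shows "(s12dot ^^ (n - 1)) \<pi> = [1..<n+1]"
proof -
  have "length \<pi> = n" "distinct \<pi>" "set \<pi> = {1..<n+1}"
    using assms(2) atLeastLessThanSuc_atLeastAtMost unfolding is_perm_def by auto
  then have "sort \<pi> = [1..<n+1]"
    by (metis distinct_remdups_id sorted_list_of_set_range sorted_list_of_set_sort_remdups)
  with \<open>length \<pi> = n\<close> show ?thesis
    using assms(1) funpow_s12dot_sorts[of \<pi> "n - 1"] by simp
qed

end
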